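(* Let $\mathcal{X}$ be a $d$-dimensional manifold with volume form $V$, $G$ a probability measure on $\mathcal{X}$ with density $g$ w.r.t. $V$, $\mathcal{Y}\subset\mathbb{R}$ with measure $\mu$ (Lebesgue or counting), and $\nu=V\times\mu$. For a latent function $f:\mathcal{X}\to\mathbb{R}$ let $\pi_f(x,y)=\pi_f(y\mid x)g(x)$, where $\pi_f(y\mid x)=h(y)\exp\{\theta(x)\kappa(y)-J(\theta(x))\}$ is a one-parameter canonical exponential family with $\theta=\zeta\circ f$. Assume $J\in C^2(\mathbb{R})$, the family is minimal with $J'$ invertible, $\varphi=J'\circ\theta=l\circ f$ for a link function $l$, $\zeta=(J')^{-1}\circ l$, and $l,\zeta$ are continuously differentiable with uniformly bounded derivatives. Then: 1. If $f_1,f_2$ take values in a bounded set $\Omega\subset\mathbb{R}$, there exist positive constants $C_4(\Omega),C_5(\Omega)$ such that $\mathrm{KL}(\pi_{f_1};\pi_{f_2})\le C_4(\Omega)\|f_1-f_2\|_\infty^2$ and $V_{2,0}(\pi_{f_1};\pi_{f_2})\le C_5(\Omega)\|f_1-f_2\|_\infty^2$. 2. There exists a uniform constant $C_6$ such that $d_H^2(\pi_{f_1},\pi_{f_2})\le C_6\|f_1-f_2\|_\infty^2$.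
   Context: $h\ge0$, $\kappa$ are functions of $y$ and $J(\theta)=\log\int_{\mathcal{Y}}h(y)e^{\theta\kappa(y)}d\mu(y)$. $\mathrm{KL}(\pi_{f_1};\pi_{f_2})=\mathbb{E}_{\pi_{f_1}}\log(\pi_{f_1}/\pi_{f_2})$; $V_{2,0}(\pi_{f_1};\pi_{f_2})=\mathbb{E}_{\pi_{f_1}}|\log(\pi_{f_1}/\pi_{f_2})-\mathrm{KL}(\pi_{f_1};\pi_{f_2})|^2$; $d_H(\pi_{f_1},\pi_{f_2})=\{\int(\sqrt{\pi_{f_1}}-\sqrt{\pi_{f_2}})^2d\nu\}^{1/2}$; $\|f\|_\infty=\sup_x|f(x)|$. *)

theory Defs
  imports "HOL-Probability.Probability"
begin

definition logpart :: "real measure \<Rightarrow> (real \<Rightarrow> real) \<Rightarrow> (real \<Rightarrow> real) \<Rightarrow> real \<Rightarrow> real" where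
  "logpart \<mu> h \<kappa> \<theta> = ln (\<integral>y. h y * exp (\<theta> * \<kappa> y) \<partial>\<mu>)"

definition cdens :: "real measure \<Rightarrow> (real \<Rightarrow> real) \<Rightarrow> (real \<Rightarrow> real) \<Rightarrow> real \<Rightarrow> real \<Rightarrow> real" where
  "cdens \<mu> h \<kappa> \<theta> y = h y * exp (\<theta> * \<kappa> y - logpart \<mu> h \<kappa> \<theta>)"

definition jdens ::
  "real measure \<Rightarrow> (real \<Rightarrow> real) \<Rightarrow> (real \<Rightarrow> real) \<Rightarrow> (real \<Rightarrow> real) \<Rightarrow> ('a \<Rightarrow> real)
   \<Rightarrow> ('a \<Rightarrow> real) \<Rightarrow> 'a \<times> real \<Rightarrow> real" where
  "jdens \<mu> h \<kappa> \<zeta> g f z = cdens \<mu> h \<kappa> (\<zeta> (f (fst z))) (snd z) * g (fst z)"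

definition KL :: "'b measure \<Rightarrow> ('b \<Rightarrow> real) \<Rightarrow> ('b \<Rightarrow> real) \<Rightarrow> real" where
  "KL \<nu> p1 p2 = (\<integral>z. p1 z * ln (p1 z / p2 z) \<partial>\<nu>)"

definition V20 :: "'b measure \<Rightarrow> ('b \<Rightarrow> real) \<Rightarrow> ('b \<Rightarrow> real) \<Rightarrow> real" where
  "V20 \<nu> p1 p2 = (\<integral>z. p1 z * \<bar>ln (p1 z / p2 z) - KL \<nu> p1 p2\<bar>^2 \<partial>\<nu>)"

definition hellinger :: "'b measure \<Rightarrow> ('b \<Rightarrow> real) \<Rightarrow> ('b \<Rightarrow> real) \<Rightarrow> real" where
  "hellinger \<nu> p1 p2 = sqrt (\<integral>z. (sqrt (p1 z) - sqrt (p2 z))^2 \<partial>\<nu>)"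

definition supnorm :: "'a measure \<Rightarrow> ('a \<Rightarrow> real) \<Rightarrow> real" where
  "supnorm V f = (SUP x\<in>space V. \<bar>f x\<bar>)"

definition minimal_family :: "real measure \<Rightarrow> (real \<Rightarrow> real) \<Rightarrow> (real \<Rightarrow> real) \<Rightarrow> bool" where
  "minimal_family \<mu> h \<kappa> \<longleftrightarrow> \<not> (\<exists>c. AE y in \<mu>. h y \<noteq> 0 \<longrightarrow> \<kappa> y = c)"

end

theory Submission
  imports Defs
begin

(* Everything reduces to the log-partition function J. For conditional densities with natural
   parameters a and b:
   - the Hellinger affinity is exp (- D), where D = (J a + J b) / 2 - J ((a + b) / 2) is the midpoint
     gap of J; since J' is monotone, D \<le> |a - b| |J' a - J' b| / 4, and because J' o zeta = l both
     factors are Lipschitz in f, which gives a constant that does not depend on the range of f;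
   - ln t \<le> t - 1 bounds the conditional KL divergence by exp (J (2 a - b) - 2 J a + J b) - 1, a second
     difference of J and hence O ((a - b)^2) on compacts;
   - the log-likelihood ratio (a - b) kappa - (J a - J b) has moments controlled by
     E_a [cosh kappa] = (exp (J (a + 1) - J a) + exp (J (a - 1) - J a)) / 2, so V_{2,0} = O ((a - b)^2).
   Integrating these conditional bounds against the density g gives the joint ones. *)

lemma MVT_between:
  fixes f :: "real \<Rightarrow> real"
  assumes "\<forall>t. f differentiable at t"
  obtains z where "min a b \<le> z" "z \<le> max a b" "f b - f a = (b - a) * deriv f z"
proof -
  have D: "\<And>x. DERIV f x :> deriv f x"
    using assms by (simp add: DERIV_deriv_iff_real_differentiable)
  consider "a < b" | "a = b" | "b < a" by linarith
  then show thesis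
  proof cases
    case 1
    with MVT2[OF 1, of f "deriv f"] D obtain z where "a < z" "z < b" "f b - f a = (b - a) * deriv f z"
      by blast
    with 1 show thesis by (intro that[of z]) auto
  next
    case 2
    then show thesis by (intro that[of a]) auto
  next
    case 3
    with MVT2[OF 3, of f "deriv f"] D obtain z where "b < z" "z < a" "f a - f b = (a - b) * deriv f z"
      by blast
    with 3 show thesis by (intro that[of z]) (auto simp: algebra_simps)
  qed
qed

lemma abs_diff_le_by_deriv_bound:
  fixes f :: "real \<Rightarrow> real"
  assumes "\<forall>t. f differentiable at t"
    and "\<And>t. min a b \<le> t \<Longrightarrow> t \<le> max a b \<Longrightarrow> \<bar>deriv f t\<bar> \<le> B"
  shows "\<bar>f a - f b\<bar> \<le> B * \<bar>a - b\<bar>"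
proof -
  obtain z where z: "min a b \<le> z" "z \<le> max a b" "f b - f a = (b - a) * deriv f z"
    using MVT_between[OF assms(1)] .
  have "\<bar>f a - f b\<bar> = \<bar>a - b\<bar> * \<bar>deriv f z\<bar>"
    using z(3) by (metis abs_minus_commute abs_mult)
  also have "\<dots> \<le> \<bar>a - b\<bar> * B"
    using assms(2)[OF z(1,2)] by (simp add: mult_left_mono)
  finally show ?thesis by (simp add: mult.commute)
qed

lemma lipschitz_if_bounded_deriv:
  fixes f :: "real \<Rightarrow> real"
  assumes "\<forall>t. f differentiable at t" and "bounded (range (deriv f))"
  obtains B where "B > 0" "\<And>u v. \<bar>f u - f v\<bar> \<le> B * \<bar>u - v\<bar>"
proof -
  obtain B where B: "\<forall>t. \<bar>deriv f t\<bar> \<le> B"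
    using assms(2) by (auto simp: bounded_real)
  show thesis
  proof (rule that)
    show "max B 1 > 0" by simp
    show "\<bar>f u - f v\<bar> \<le> max B 1 * \<bar>u - v\<bar>" for u v
      using B by (intro abs_diff_le_by_deriv_bound[OF assms(1)]) (auto intro: max.coboundedI1)
  qed
qed

lemma continuous_on_if_differentiable:
  fixes f :: "real \<Rightarrow> real"
  assumes "\<forall>t. f differentiable at t"
  shows "continuous_on S f"
  using assms by (meson differentiable_imp_continuous_on differentiable_at_imp_differentiable_on)

lemma bounded_on_Icc:
  fixes f :: "real \<Rightarrow> real"
  assumes "continuous_on {lo..hi} f"
  obtains M where "M \<ge> 0" "\<And>t. t \<in> {lo..hi} \<Longrightarrow> \<bar>f t\<bar> \<le> M"
proof -
  have "bounded (f ` {lo..hi})"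
    by (intro compact_imp_bounded compact_continuous_image assms compact_Icc)
  then obtain M where "\<forall>t\<in>{lo..hi}. \<bar>f t\<bar> \<le> M" by (auto simp: bounded_real)
  then show thesis by (intro that[of "max M 0"]) (auto intro: max.coboundedI1)
qed

text \<open>A continuous injective derivative is monotone, so on [a, b] it stays between
  its values at the endpoints.\<close>
lemma midpoint_gap_le:
  fixes f :: "real \<Rightarrow> real"
  assumes f_diff: "\<forall>t. f differentiable at t" and f'_diff: "\<forall>t. deriv f differentiable at t"
    and f'_inj: "inj (deriv f)"
  shows "(f a + f b) / 2 - f ((a + b) / 2) \<le> \<bar>a - b\<bar> * \<bar>deriv f a - deriv f b\<bar> / 4"
proof -
  have f'_cont: "continuous_on S (deriv f)" for S
    by (rule continuous_on_if_differentiable[OF f'_diff])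
  have ordered: "(f a + f b) / 2 - f ((a + b) / 2) \<le> \<bar>a - b\<bar> * \<bar>deriv f a - deriv f b\<bar> / 4"
    if "a < b" for a b
  proof -
    define m where "m = (a + b) / 2"
    have am: "a < m" "m < b" using \<open>a < b\<close> by (auto simp: m_def)
    obtain z1 where z1: "a \<le> z1" "z1 \<le> m" "f m - f a = (m - a) * deriv f z1"
      using MVT_between[OF f_diff, of a m] am by auto
    obtain z2 where z2: "m \<le> z2" "z2 \<le> b" "f b - f m = (b - m) * deriv f z2"
      using MVT_between[OF f_diff, of m b] am by auto
    have between: "min (deriv f a) (deriv f b) \<le> deriv f z \<and> deriv f z \<le> max (deriv f a) (deriv f b)"
      if "a \<le> z" "z \<le> b" for z
    proof (cases "z = a \<or> z = b")
      case False
      with that show ?thesis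
        using continuous_inj_imp_mono[of a z b "deriv f"] f'_cont inj_on_subset[OF f'_inj] by force
    qed auto
    have "(f a + f b) / 2 - f m = (b - a) / 4 * (deriv f z2 - deriv f z1)"
      using z1(3) z2(3) by (simp add: m_def field_simps)
    also have "\<dots> \<le> (b - a) / 4 * \<bar>deriv f a - deriv f b\<bar>"
      using between[of z1] between[of z2] z1 z2 am
      by (intro mult_left_mono) (auto simp: abs_if min_def max_def split: if_splits)
    finally show ?thesis using \<open>a < b\<close> by (simp add: m_def)
  qed
  consider "a < b" | "a = b" | "b < a" by linarith
  then show ?thesis
  proof cases
    case 3
    then show ?thesis using ordered[OF 3] by (simp add: add.commute abs_minus_commute)
  qed (use ordered in auto)
qed

lemma second_difference_le:
  fixes f :: "real \<Rightarrow> real"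
  assumes f_diff: "\<forall>t. f differentiable at t" and f'_diff: "\<forall>t. deriv f differentiable at t"
    and f''_bound: "\<And>t. a - \<bar>a - b\<bar> \<le> t \<Longrightarrow> t \<le> a + \<bar>a - b\<bar> \<Longrightarrow> \<bar>deriv (deriv f) t\<bar> \<le> M"
  shows "\<bar>f (2 * a - b) - 2 * f a + f b\<bar> \<le> 2 * M * (a - b)\<^sup>2"
proof -
  define d where "d = a - b"
  obtain z1 where z1: "min a (a + d) \<le> z1" "z1 \<le> max a (a + d)" "f (a + d) - f a = d * deriv f z1"
    using MVT_between[OF f_diff, of a "a + d"] by auto
  obtain z2 where z2: "min b a \<le> z2" "z2 \<le> max b a" "f a - f b = d * deriv f z2"
    using MVT_between[OF f_diff, of b a] by (auto simp: d_def)
  have "M \<ge> 0" using f''_bound[of a] by (auto intro: order_trans[OF abs_ge_zero])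
  have "\<bar>deriv f z1 - deriv f z2\<bar> \<le> M * \<bar>z1 - z2\<bar>"
    using z1 z2
    by (intro abs_diff_le_by_deriv_bound[OF f'_diff] f''_bound)
       (auto simp: d_def abs_if min_def max_def split: if_splits)
  also have "\<dots> \<le> M * (2 * \<bar>d\<bar>)"
    using z1 z2 \<open>M \<ge> 0\<close>
    by (intro mult_left_mono) (auto simp: d_def abs_if min_def max_def split: if_splits)
  finally have z12: "\<bar>deriv f z1 - deriv f z2\<bar> \<le> M * (2 * \<bar>d\<bar>)" .
  have "\<bar>f (2 * a - b) - 2 * f a + f b\<bar> = \<bar>d\<bar> * \<bar>deriv f z1 - deriv f z2\<bar>"
    using z1(3) z2(3) by (simp add: d_def algebra_simps flip: abs_mult)
  also have "\<dots> \<le> \<bar>d\<bar> * (M * (2 * \<bar>d\<bar>))"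
    by (intro mult_left_mono z12) auto
  also have "\<dots> = 2 * M * d\<^sup>2"
    by (simp add: power2_eq_square abs_mult_self_eq algebra_simps)
  finally show ?thesis by (simp add: d_def)
qed

lemma exp_minus_one_le_abs_mult_exp_abs: "exp (x :: real) - 1 \<le> \<bar>x\<bar> * exp \<bar>x\<bar>"
proof -
  have "exp x * (1 - x) \<le> exp x * exp (- x)"
    using exp_ge_add_one_self[of "- x"] by (intro mult_left_mono) auto
  then have "exp x - 1 \<le> x * exp x" by (simp add: algebra_simps flip: exp_add)
  also have "\<dots> \<le> \<bar>x\<bar> * exp \<bar>x\<bar>" by (intro mult_mono) auto
  finally show ?thesis .
qed

lemma abs_le_two_cosh: "\<bar>x :: real\<bar> \<le> 2 * cosh x"
proof -
  have "\<bar>x\<bar> \<le> exp \<bar>x\<bar>" using exp_ge_add_one_self[of "\<bar>x\<bar>"] by linarith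
  also have "exp \<bar>x\<bar> \<le> 2 * cosh x" by (cases "x \<ge> 0") (auto simp: cosh_def)
  finally show ?thesis .
qed

lemma square_le_eight_cosh: "(x :: real)\<^sup>2 \<le> 8 * cosh x"
proof -
  have "(1 + \<bar>x\<bar> / 2)\<^sup>2 \<le> exp \<bar>x\<bar>"
    using exp_ge_one_plus_x_over_n_power_n[where x="\<bar>x\<bar>" and n=2] by simp
  then have "x\<^sup>2 \<le> 4 * exp \<bar>x\<bar>" by (simp add: power2_eq_square field_simps)
  also have "exp \<bar>x\<bar> \<le> 2 * cosh x" by (cases "x \<ge> 0") (auto simp: cosh_def)
  finally show ?thesis by simp
qed

locale exp_family =
  fixes \<mu> :: "real measure" and h \<kappa> :: "real \<Rightarrow> real"
  assumes h_meas [measurable]: "h \<in> borel_measurable \<mu>" and h_nonneg: "\<And>y. h y \<ge> 0"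
    and kappa_meas [measurable]: "\<kappa> \<in> borel_measurable \<mu>"
    and integrable_normalizer: "\<And>\<theta>. integrable \<mu> (\<lambda>y. h y * exp (\<theta> * \<kappa> y))"
    and normalizer_pos: "\<And>\<theta>. (\<integral>y. h y * exp (\<theta> * \<kappa> y) \<partial>\<mu>) > 0"
begin

abbreviation J :: "real \<Rightarrow> real" where "J \<equiv> logpart \<mu> h \<kappa>"
abbreviation dens :: "real \<Rightarrow> real \<Rightarrow> real" where "dens \<equiv> cdens \<mu> h \<kappa>"

lemma dens_measurable [measurable]: "dens \<theta> \<in> borel_measurable \<mu>"
  unfolding cdens_def by measurable

lemma integral_normalizer: "(\<integral>y. h y * exp (\<theta> * \<kappa> y) \<partial>\<mu>) = exp (J \<theta>)"
  using normalizer_pos by (simp add: logpart_def)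

lemma dens_eq: "dens \<theta> y = h y * exp (\<theta> * \<kappa> y) / exp (J \<theta>)"
  by (simp add: cdens_def exp_diff)

lemma dens_nonneg: "dens \<theta> y \<ge> 0"
  using h_nonneg by (simp add: cdens_def)

lemma integrable_dens: "integrable \<mu> (dens \<theta>)"
  unfolding dens_eq[abs_def] by (intro integrable_divide integrable_normalizer)

lemma integral_dens: "(\<integral>y. dens \<theta> y \<partial>\<mu>) = 1"
  by (simp add: dens_eq integral_normalizer)

lemma dens_mult_exp: "dens a y * exp (c * \<kappa> y) = exp (J (a + c) - J a) * dens (a + c) y"
  by (simp add: dens_eq exp_diff field_simps flip: exp_add)

definition cosh_moment :: "real \<Rightarrow> real" where
  "cosh_moment a = (\<integral>y. dens a y * cosh (\<kappa> y) \<partial>\<mu>)"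

lemma dens_mult_cosh:
  "dens a y * cosh (\<kappa> y) =
     (exp (J (a + 1) - J a) * dens (a + 1) y + exp (J (a - 1) - J a) * dens (a - 1) y) / 2"
  using dens_mult_exp[of a y 1] dens_mult_exp[of a y "- 1"]
  by (simp add: cosh_def distrib_left add_divide_distrib)

lemma integrable_dens_mult_cosh: "integrable \<mu> (\<lambda>y. dens a y * cosh (\<kappa> y))"
  unfolding dens_mult_cosh using integrable_dens by auto

lemma cosh_moment_eq: "cosh_moment a = (exp (J (a + 1) - J a) + exp (J (a - 1) - J a)) / 2"
  unfolding cosh_moment_def dens_mult_cosh using integrable_dens by (simp add: integral_dens)

lemma cosh_moment_nonneg: "cosh_moment a \<ge> 0"
  by (simp add: cosh_moment_eq add_nonneg_nonneg)

lemma sqrt_dens_mult: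
  "sqrt (dens a y) * sqrt (dens b y) =
     dens ((a + b) / 2) y * exp (- ((J a + J b) / 2 - J ((a + b) / 2)))"
proof -
  have "dens a y * dens b y = (dens ((a + b) / 2) y * exp (- ((J a + J b) / 2 - J ((a + b) / 2))))\<^sup>2"
    by (simp add: cdens_def power2_eq_square algebra_simps flip: exp_add)
  then show ?thesis
    by (simp add: dens_nonneg flip: real_sqrt_mult)
qed

lemma integrable_sqrt_dens_diff_square: "integrable \<mu> (\<lambda>y. (sqrt (dens a y) - sqrt (dens b y))\<^sup>2)"
  and integral_sqrt_dens_diff_square_le:
    "(\<integral>y. (sqrt (dens a y) - sqrt (dens b y))\<^sup>2 \<partial>\<mu>) \<le> 2 * ((J a + J b) / 2 - J ((a + b) / 2))"
proof -
  define D where "D = (J a + J b) / 2 - J ((a + b) / 2)"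
  have eq: "(sqrt (dens a y) - sqrt (dens b y))\<^sup>2 = dens a y + dens b y - 2 * exp (- D) * dens ((a + b) / 2) y"
    for y
    using sqrt_dens_mult[of a y b] dens_nonneg[of a y] dens_nonneg[of b y]
    by (simp add: power2_diff D_def)
  show "integrable \<mu> (\<lambda>y. (sqrt (dens a y) - sqrt (dens b y))\<^sup>2)"
    unfolding eq using integrable_dens by auto
  have "(\<integral>y. (sqrt (dens a y) - sqrt (dens b y))\<^sup>2 \<partial>\<mu>) = 2 - 2 * exp (- D)"
    unfolding eq using integrable_dens by (simp add: integral_dens)
  also have "\<dots> \<le> 2 * D"
    using exp_ge_add_one_self[of "- D"] by simp
  finally show "(\<integral>y. (sqrt (dens a y) - sqrt (dens b y))\<^sup>2 \<partial>\<mu>) \<le> 2 * ((J a + J b) / 2 - J ((a + b) / 2))"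
    by (simp add: D_def)
qed

definition llr :: "real \<Rightarrow> real \<Rightarrow> real \<Rightarrow> real" where
  "llr a b y = (a - b) * \<kappa> y - (J a - J b)"

lemma llr_measurable [measurable]: "llr a b \<in> borel_measurable \<mu>"
  unfolding llr_def by measurable

text \<open>Away from the support of h both sides vanish, so the log-likelihood ratio may replace the
  logarithm of the density ratio everywhere.\<close>
lemma dens_mult_log_ratio:
  assumes "c \<ge> 0"
  shows "dens a y * c * \<phi> (ln (dens a y * c / (dens b y * c))) = c * (dens a y * \<phi> (llr a b y))"
proof (cases "c > 0 \<and> h y > 0")
  case True
  then have "dens a y * c / (dens b y * c) = exp (llr a b y)"
    by (simp add: cdens_def llr_def field_simps flip: exp_add exp_diff)
  then show ?thesis by simp
next
  case False
  with assms h_nonneg[of y] have "c = 0 \<or> h y = 0" by auto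
  then show ?thesis by (auto simp: cdens_def)
qed

lemma dens_mult_exp_llr:
  "dens a y * exp (llr a b y) = dens (2 * a - b) y * exp (J (2 * a - b) - 2 * J a + J b)"
proof -
  have "a * \<kappa> y - J a + llr a b y =
      (2 * a - b) * \<kappa> y - J (2 * a - b) + (J (2 * a - b) - 2 * J a + J b)"
    by (simp add: llr_def algebra_simps)
  then show ?thesis by (simp add: cdens_def mult.assoc flip: exp_add)
qed

lemma integrable_dens_mult_exp_llr: "integrable \<mu> (\<lambda>y. dens a y * exp (llr a b y))"
  unfolding dens_mult_exp_llr using integrable_dens by auto

lemma integral_dens_mult_exp_llr:
  "(\<integral>y. dens a y * exp (llr a b y) \<partial>\<mu>) = exp (J (2 * a - b) - 2 * J a + J b)"
  unfolding dens_mult_exp_llr by (simp add: integral_dens)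

lemma
  shows integrable_dens_mult_abs_llr: "integrable \<mu> (\<lambda>y. dens a y * \<bar>llr a b y\<bar>)"
    and integral_dens_mult_abs_llr_le:
      "(\<integral>y. dens a y * \<bar>llr a b y\<bar> \<partial>\<mu>) \<le> 2 * \<bar>a - b\<bar> * cosh_moment a + \<bar>J a - J b\<bar>"
proof -
  let ?F = "\<lambda>y. 2 * \<bar>a - b\<bar> * (dens a y * cosh (\<kappa> y)) + \<bar>J a - J b\<bar> * dens a y"
  have int_F: "integrable \<mu> ?F"
    using integrable_dens_mult_cosh integrable_dens by auto
  have le_F: "dens a y * \<bar>llr a b y\<bar> \<le> ?F y" for y
  proof -
    have "\<bar>llr a b y\<bar> \<le> \<bar>a - b\<bar> * \<bar>\<kappa> y\<bar> + \<bar>J a - J b\<bar>"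
      unfolding llr_def by (metis abs_mult abs_triangle_ineq4)
    also have "\<dots> \<le> \<bar>a - b\<bar> * (2 * cosh (\<kappa> y)) + \<bar>J a - J b\<bar>"
      by (intro add_right_mono mult_left_mono abs_le_two_cosh) auto
    finally show ?thesis
      using dens_nonneg[of a y] by (auto simp: algebra_simps intro: mult_left_mono[THEN order_trans])
  qed
  show int: "integrable \<mu> (\<lambda>y. dens a y * \<bar>llr a b y\<bar>)"
    by (rule Bochner_Integration.integrable_bound[OF int_F])
       (use le_F dens_nonneg in \<open>auto intro!: AE_I2 order_trans[OF _ abs_ge_self]\<close>)
  have "(\<integral>y. dens a y * \<bar>llr a b y\<bar> \<partial>\<mu>) \<le> (\<integral>y. ?F y \<partial>\<mu>)"
    by (intro integral_mono int int_F le_F)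
  also have "\<dots> = 2 * \<bar>a - b\<bar> * cosh_moment a + \<bar>J a - J b\<bar>"
    using integrable_dens_mult_cosh integrable_dens by (simp add: cosh_moment_def integral_dens)
  finally show "(\<integral>y. dens a y * \<bar>llr a b y\<bar> \<partial>\<mu>) \<le> 2 * \<bar>a - b\<bar> * cosh_moment a + \<bar>J a - J b\<bar>" .
qed

lemma
  shows integrable_dens_mult_llr_dev: "integrable \<mu> (\<lambda>y. dens a y * (llr a b y - K)\<^sup>2)"
    and integral_dens_mult_llr_dev_le:
      "(\<integral>y. dens a y * (llr a b y - K)\<^sup>2 \<partial>\<mu>) \<le>
         3 * (8 * (a - b)\<^sup>2 * cosh_moment a + (J a - J b)\<^sup>2 + K\<^sup>2)"
proof -
  let ?F = "\<lambda>y. 3 * (8 * (a - b)\<^sup>2 * (dens a y * cosh (\<kappa> y)) + ((J a - J b)\<^sup>2 + K\<^sup>2) * dens a y)"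
  have int_F: "integrable \<mu> ?F"
    using integrable_dens_mult_cosh integrable_dens by auto
  have le_F: "dens a y * (llr a b y - K)\<^sup>2 \<le> ?F y" for y
  proof -
    have three_squares: "(u + v + w)\<^sup>2 \<le> 3 * (u\<^sup>2 + v\<^sup>2 + w\<^sup>2)" for u v w :: real
    proof -
      have "0 \<le> (u - v)\<^sup>2 + (v - w)\<^sup>2 + (u - w)\<^sup>2" by simp
      then show ?thesis by (simp add: power2_eq_square algebra_simps)
    qed
    have "(llr a b y - K)\<^sup>2 = ((a - b) * \<kappa> y + (- (J a - J b)) + (- K))\<^sup>2"
      by (simp add: llr_def algebra_simps)
    also have "\<dots> \<le> 3 * (((a - b) * \<kappa> y)\<^sup>2 + (- (J a - J b))\<^sup>2 + (- K)\<^sup>2)"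
      by (rule three_squares)
    also have "\<dots> = 3 * ((a - b)\<^sup>2 * (\<kappa> y)\<^sup>2 + (J a - J b)\<^sup>2 + K\<^sup>2)"
      by (simp only: power2_minus power_mult_distrib)
    also have "\<dots> \<le> 3 * ((a - b)\<^sup>2 * (8 * cosh (\<kappa> y)) + (J a - J b)\<^sup>2 + K\<^sup>2)"
      by (intro mult_left_mono add_right_mono square_le_eight_cosh) auto
    finally show ?thesis
      using dens_nonneg[of a y] by (auto simp: algebra_simps intro: mult_left_mono[THEN order_trans])
  qed
  show int: "integrable \<mu> (\<lambda>y. dens a y * (llr a b y - K)\<^sup>2)"
    by (rule Bochner_Integration.integrable_bound[OF int_F])
       (use le_F dens_nonneg in \<open>auto intro!: AE_I2 order_trans[OF _ abs_ge_self]\<close>)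
  have "(\<integral>y. dens a y * (llr a b y - K)\<^sup>2 \<partial>\<mu>) \<le> (\<integral>y. ?F y \<partial>\<mu>)"
    by (intro integral_mono int int_F le_F)
  also have "\<dots> = 3 * (8 * (a - b)\<^sup>2 * cosh_moment a + (J a - J b)\<^sup>2 + K\<^sup>2)"
    using integrable_dens_mult_cosh integrable_dens by (simp add: cosh_moment_def integral_dens)
  finally show "(\<integral>y. dens a y * (llr a b y - K)\<^sup>2 \<partial>\<mu>) \<le>
      3 * (8 * (a - b)\<^sup>2 * cosh_moment a + (J a - J b)\<^sup>2 + K\<^sup>2)" .
qed

lemma logpart_local_bounds:
  assumes J_diff: "\<forall>t. J differentiable at t" and J'_diff: "\<forall>t. deriv J differentiable at t"
    and J''_cont: "continuous_on UNIV (deriv (deriv J))"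
  obtains M1 M2 MC where "M1 \<ge> 0" "M2 \<ge> 0" "MC \<ge> 0"
    and "\<And>a b. \<bar>a\<bar> \<le> R \<Longrightarrow> \<bar>b\<bar> \<le> R \<Longrightarrow> \<bar>J a - J b\<bar> \<le> M1 * \<bar>a - b\<bar>"
    and "\<And>a b. \<bar>a\<bar> \<le> R \<Longrightarrow> \<bar>b\<bar> \<le> R \<Longrightarrow>
      exp (J (2 * a - b) - 2 * J a + J b) \<le> 1 + M2 * (a - b)\<^sup>2"
    and "\<And>a. \<bar>a\<bar> \<le> R \<Longrightarrow> cosh_moment a \<le> MC"
proof -
  define T where "T = {- 3 * R..3 * R}"
  have J_cont: "continuous_on S J" for S
    by (rule continuous_on_if_differentiable[OF J_diff])
  have J_shifts_cont: "continuous_on T (\<lambda>t. J (t + 1))" "continuous_on T (\<lambda>t. J (t - 1))"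
    by (rule continuous_on_compose2[OF J_cont[of UNIV]], intro continuous_intros, simp)+
  have cosh_moment_cont: "continuous_on T cosh_moment"
    unfolding cosh_moment_eq[abs_def] by (intro continuous_intros J_cont J_shifts_cont) simp
  obtain MC where MC: "MC \<ge> 0" "\<And>t. t \<in> T \<Longrightarrow> \<bar>cosh_moment t\<bar> \<le> MC"
    unfolding T_def by (rule bounded_on_Icc[OF cosh_moment_cont[unfolded T_def]]) blast
  obtain B1 where B1: "B1 \<ge> 0" "\<And>t. t \<in> T \<Longrightarrow> \<bar>deriv J t\<bar> \<le> B1"
    unfolding T_def by (rule bounded_on_Icc[OF continuous_on_if_differentiable[OF J'_diff]]) blast
  obtain B2 where B2: "B2 \<ge> 0" "\<And>t. t \<in> T \<Longrightarrow> \<bar>deriv (deriv J) t\<bar> \<le> B2"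
    unfolding T_def by (rule bounded_on_Icc[OF continuous_on_subset[OF J''_cont]]) auto
  show thesis
  proof (rule that[of B1 "2 * B2 * exp (8 * B2 * R\<^sup>2)" MC])
    fix a b assume ab: "\<bar>a\<bar> \<le> R" "\<bar>b\<bar> \<le> R"
    show "\<bar>J a - J b\<bar> \<le> B1 * \<bar>a - b\<bar>"
      using ab by (intro abs_diff_le_by_deriv_bound[OF J_diff] B1) (auto simp: T_def)
    define E where "E = J (2 * a - b) - 2 * J a + J b"
    have E_le: "\<bar>E\<bar> \<le> 2 * B2 * (a - b)\<^sup>2"
      unfolding E_def
    proof (intro second_difference_le[OF J_diff J'_diff] B2)
      fix t assume "a - \<bar>a - b\<bar> \<le> t" "t \<le> a + \<bar>a - b\<bar>"
      with ab show "t \<in> T" unfolding T_def by (simp, arith)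
    qed
    have "\<bar>a - b\<bar> \<le> 2 * R"
      using ab by arith
    then have "(a - b)\<^sup>2 \<le> (2 * R)\<^sup>2"
      using power_mono[of "\<bar>a - b\<bar>" "2 * R" 2] by simp
    then have "2 * B2 * (a - b)\<^sup>2 \<le> 2 * B2 * (2 * R)\<^sup>2"
      using B2(1) by (intro mult_left_mono) auto
    with E_le have E_max: "\<bar>E\<bar> \<le> 8 * B2 * R\<^sup>2"
      by (simp add: power_mult_distrib)
    have "exp E - 1 \<le> \<bar>E\<bar> * exp \<bar>E\<bar>"
      by (rule exp_minus_one_le_abs_mult_exp_abs)
    also have "\<dots> \<le> 2 * B2 * (a - b)\<^sup>2 * exp (8 * B2 * R\<^sup>2)"
      using E_le E_max by (intro mult_mono) auto
    finally show "exp (J (2 * a - b) - 2 * J a + J b) \<le> 1 + 2 * B2 * exp (8 * B2 * R\<^sup>2) * (a - b)\<^sup>2"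
      by (simp add: E_def algebra_simps)
  next
    fix a assume "\<bar>a\<bar> \<le> R"
    then have "a \<in> T" unfolding T_def by (simp, arith)
    then show "cosh_moment a \<le> MC" using MC(2)[of a] by simp
  qed (use B1 B2 MC in auto)
qed

end

lemma abs_le_supnorm:
  assumes "bounded (u ` space V)" and "x \<in> space V"
  shows "\<bar>u x\<bar> \<le> supnorm V u"
proof -
  have "bdd_above ((\<lambda>x. \<bar>u x\<bar>) ` space V)"
    using assms(1) by (auto simp: bounded_real intro: bdd_aboveI2)
  then show ?thesis unfolding supnorm_def by (rule cSUP_upper[OF assms(2)])
qed

lemma bounded_image_diff:
  fixes f1 f2 :: "'a \<Rightarrow> real"
  assumes "bounded \<Omega>" and "\<And>x. x \<in> S \<Longrightarrow> f1 x \<in> \<Omega> \<and> f2 x \<in> \<Omega>"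
  shows "bounded ((\<lambda>x. f1 x - f2 x) ` S)"
proof -
  obtain R where R: "\<And>w. w \<in> \<Omega> \<Longrightarrow> \<bar>w\<bar> \<le> R"
    using assms(1) by (auto simp: bounded_real)
  have "\<bar>f1 x - f2 x\<bar> \<le> 2 * R" if "x \<in> S" for x
    using R[of "f1 x"] R[of "f2 x"] assms(2)[OF that] by arith
  then show ?thesis by (auto simp: bounded_real)
qed

locale joint_model = exp_family +
  fixes V :: "'a measure" and g :: "'a \<Rightarrow> real"
  assumes mu_sigma_finite: "sigma_finite_measure \<mu>"
    and g_meas [measurable]: "g \<in> borel_measurable V"
    and g_nonneg: "\<And>x. x \<in> space V \<Longrightarrow> g x \<ge> 0"
    and g_normalized: "(\<integral>\<^sup>+x. g x \<partial>V) = 1"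
begin

abbreviation joint :: "('a \<Rightarrow> real) \<Rightarrow> 'a \<times> real \<Rightarrow> real" where
  "joint \<theta> \<equiv> jdens \<mu> h \<kappa> (\<lambda>t. t) g \<theta>"

lemma jdens_eq_joint: "jdens \<mu> h \<kappa> \<zeta> g f = joint (\<lambda>x. \<zeta> (f x))"
  by (simp add: jdens_def fun_eq_iff)

lemma space_nonempty: "space V \<noteq> {}"
  using g_normalized by (auto simp: nn_integral_empty)

lemma logpart_measurable [measurable]: "J \<in> borel_measurable borel"
proof -
  have [measurable]: "(\<lambda>\<theta>. \<integral>y. h y * exp (\<theta> * \<kappa> y) \<partial>\<mu>) \<in> borel_measurable borel"
    by (rule sigma_finite_measure.borel_measurable_lebesgue_integral[OF mu_sigma_finite]) measurable
  show ?thesis unfolding logpart_def[abs_def] by measurable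
qed

lemma joint_measurable:
  assumes [measurable]: "\<theta> \<in> borel_measurable V"
  shows "joint \<theta> \<in> borel_measurable (V \<Otimes>\<^sub>M \<mu>)"
  unfolding jdens_def cdens_def by measurable

lemma nn_integral_mixture:
  assumes F_meas: "F \<in> borel_measurable (V \<Otimes>\<^sub>M \<mu>)"
    and F_eq: "\<And>x y. x \<in> space V \<Longrightarrow> y \<in> space \<mu> \<Longrightarrow> F (x, y) = g x * u x y"
    and u_nonneg: "\<And>x y. x \<in> space V \<Longrightarrow> y \<in> space \<mu> \<Longrightarrow> u x y \<ge> 0"
    and u_int: "\<And>x. x \<in> space V \<Longrightarrow> integrable \<mu> (u x)"
  shows "(\<integral>\<^sup>+z. F z \<partial>(V \<Otimes>\<^sub>M \<mu>)) = (\<integral>\<^sup>+x. ennreal (g x) * ennreal (\<integral>y. u x y \<partial>\<mu>) \<partial>V)"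
proof -
  have "(\<integral>\<^sup>+z. F z \<partial>(V \<Otimes>\<^sub>M \<mu>)) = (\<integral>\<^sup>+x. \<integral>\<^sup>+y. F (x, y) \<partial>\<mu> \<partial>V)"
    by (rule sigma_finite_measure.nn_integral_fst[OF mu_sigma_finite, symmetric])
       (use F_meas in measurable)
  also have "\<dots> = (\<integral>\<^sup>+x. ennreal (g x) * ennreal (\<integral>y. u x y \<partial>\<mu>) \<partial>V)"
  proof (rule nn_integral_cong)
    fix x assume x: "x \<in> space V"
    have "(\<integral>\<^sup>+y. F (x, y) \<partial>\<mu>) = (\<integral>\<^sup>+y. ennreal (g x) * ennreal (u x y) \<partial>\<mu>)"
      by (intro nn_integral_cong) (simp add: F_eq x ennreal_mult g_nonneg u_nonneg)
    also have "\<dots> = ennreal (g x) * (\<integral>\<^sup>+y. u x y \<partial>\<mu>)"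
      by (rule nn_integral_cmult) (use u_int[OF x] in auto)
    also have "(\<integral>\<^sup>+y. u x y \<partial>\<mu>) = ennreal (\<integral>y. u x y \<partial>\<mu>)"
      by (rule nn_integral_eq_integral[OF u_int[OF x]]) (auto intro!: AE_I2 u_nonneg x)
    finally show "(\<integral>\<^sup>+y. F (x, y) \<partial>\<mu>) = ennreal (g x) * ennreal (\<integral>y. u x y \<partial>\<mu>)" .
  qed
  finally show ?thesis .
qed

lemma
  assumes F_meas: "F \<in> borel_measurable (V \<Otimes>\<^sub>M \<mu>)"
    and F_eq: "\<And>x y. x \<in> space V \<Longrightarrow> y \<in> space \<mu> \<Longrightarrow> F (x, y) = g x * u x y"
    and u_nonneg: "\<And>x y. x \<in> space V \<Longrightarrow> y \<in> space \<mu> \<Longrightarrow> u x y \<ge> 0"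
    and u_int: "\<And>x. x \<in> space V \<Longrightarrow> integrable \<mu> (u x)"
    and u_le: "\<And>x. x \<in> space V \<Longrightarrow> (\<integral>y. u x y \<partial>\<mu>) \<le> B" and "0 \<le> B"
  shows integrable_mixture: "integrable (V \<Otimes>\<^sub>M \<mu>) F"
    and integral_mixture_le: "(\<integral>z. F z \<partial>(V \<Otimes>\<^sub>M \<mu>)) \<le> B"
proof -
  have "(\<integral>\<^sup>+z. F z \<partial>(V \<Otimes>\<^sub>M \<mu>)) = (\<integral>\<^sup>+x. ennreal (g x) * ennreal (\<integral>y. u x y \<partial>\<mu>) \<partial>V)"
    by (rule nn_integral_mixture[OF F_meas F_eq u_nonneg u_int])
  also have "\<dots> \<le> (\<integral>\<^sup>+x. ennreal (g x) * ennreal B \<partial>V)"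
    by (intro nn_integral_mono mult_left_mono ennreal_leI u_le) auto
  also have "\<dots> = ennreal B"
    by (simp add: nn_integral_multc g_normalized)
  finally have le: "(\<integral>\<^sup>+z. F z \<partial>(V \<Otimes>\<^sub>M \<mu>)) \<le> ennreal B" .
  have nonneg: "AE z in V \<Otimes>\<^sub>M \<mu>. 0 \<le> F z"
    by (intro AE_I2) (auto simp: space_pair_measure F_eq g_nonneg u_nonneg)
  show "integrable (V \<Otimes>\<^sub>M \<mu>) F"
    by (rule integrableI_nonneg[OF F_meas nonneg]) (use le in \<open>auto simp: top_unique less_top[symmetric]\<close>)
  show "(\<integral>z. F z \<partial>(V \<Otimes>\<^sub>M \<mu>)) \<le> B"
    by (rule integral_real_bounded[OF \<open>0 \<le> B\<close> le])
qed

lemma integral_mixture_eq: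
  assumes F_meas: "F \<in> borel_measurable (V \<Otimes>\<^sub>M \<mu>)"
    and F_eq: "\<And>x y. x \<in> space V \<Longrightarrow> y \<in> space \<mu> \<Longrightarrow> F (x, y) = g x * u x y"
    and u_nonneg: "\<And>x y. x \<in> space V \<Longrightarrow> y \<in> space \<mu> \<Longrightarrow> u x y \<ge> 0"
    and u_int: "\<And>x. x \<in> space V \<Longrightarrow> integrable \<mu> (u x)"
    and u_eq: "\<And>x. x \<in> space V \<Longrightarrow> (\<integral>y. u x y \<partial>\<mu>) = B" and "0 \<le> B"
  shows "(\<integral>z. F z \<partial>(V \<Otimes>\<^sub>M \<mu>)) = B"
proof -
  have "(\<integral>\<^sup>+z. F z \<partial>(V \<Otimes>\<^sub>M \<mu>)) = (\<integral>\<^sup>+x. ennreal (g x) * ennreal (\<integral>y. u x y \<partial>\<mu>) \<partial>V)"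
    by (rule nn_integral_mixture[OF F_meas F_eq u_nonneg u_int])
  also have "\<dots> = (\<integral>\<^sup>+x. ennreal (g x) * ennreal B \<partial>V)"
    by (intro nn_integral_cong) (simp add: u_eq)
  also have "\<dots> = ennreal B"
    by (simp add: nn_integral_multc g_normalized)
  finally have eq: "(\<integral>\<^sup>+z. F z \<partial>(V \<Otimes>\<^sub>M \<mu>)) = ennreal B" .
  have nonneg: "AE z in V \<Otimes>\<^sub>M \<mu>. 0 \<le> F z"
    by (intro AE_I2) (auto simp: space_pair_measure F_eq g_nonneg u_nonneg)
  show ?thesis using integral_eq_nn_integral[OF F_meas nonneg] eq \<open>0 \<le> B\<close> by simp
qed

lemma integral_joint_log_ratio:
  "(\<integral>z. joint \<theta>1 z * \<phi> (ln (joint \<theta>1 z / joint \<theta>2 z)) \<partial>(V \<Otimes>\<^sub>M \<mu>)) =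
   (\<integral>z. g (fst z) * (dens (\<theta>1 (fst z)) (snd z) * \<phi> (llr (\<theta>1 (fst z)) (\<theta>2 (fst z)) (snd z)))
      \<partial>(V \<Otimes>\<^sub>M \<mu>))"
proof (rule Bochner_Integration.integral_cong[OF refl])
  fix z assume "z \<in> space (V \<Otimes>\<^sub>M \<mu>)"
  then have "g (fst z) \<ge> 0" by (auto simp: space_pair_measure g_nonneg)
  then show "joint \<theta>1 z * \<phi> (ln (joint \<theta>1 z / joint \<theta>2 z)) =
      g (fst z) * (dens (\<theta>1 (fst z)) (snd z) * \<phi> (llr (\<theta>1 (fst z)) (\<theta>2 (fst z)) (snd z)))"
    unfolding jdens_def by (rule dens_mult_log_ratio)
qed

lemma hellinger_joint_le:
  assumes [measurable]: "\<theta>1 \<in> borel_measurable V" "\<theta>2 \<in> borel_measurable V"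
    and gap: "\<And>x. x \<in> space V \<Longrightarrow> (J (\<theta>1 x) + J (\<theta>2 x)) / 2 - J ((\<theta>1 x + \<theta>2 x) / 2) \<le> B"
    and "0 \<le> B"
  shows "(hellinger (V \<Otimes>\<^sub>M \<mu>) (joint \<theta>1) (joint \<theta>2))\<^sup>2 \<le> 2 * B"
proof -
  let ?I = "\<integral>z. (sqrt (joint \<theta>1 z) - sqrt (joint \<theta>2 z))\<^sup>2 \<partial>(V \<Otimes>\<^sub>M \<mu>)"
  have "?I \<le> 2 * B"
  proof (rule integral_mixture_le[where u = "\<lambda>x y. (sqrt (dens (\<theta>1 x) y) - sqrt (dens (\<theta>2 x) y))\<^sup>2"])
    show "(\<lambda>z. (sqrt (joint \<theta>1 z) - sqrt (joint \<theta>2 z))\<^sup>2) \<in> borel_measurable (V \<Otimes>\<^sub>M \<mu>)"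
      using joint_measurable[OF assms(1)] joint_measurable[OF assms(2)] by measurable
    show "(sqrt (joint \<theta>1 (x, y)) - sqrt (joint \<theta>2 (x, y)))\<^sup>2 =
        g x * (sqrt (dens (\<theta>1 x) y) - sqrt (dens (\<theta>2 x) y))\<^sup>2" if "x \<in> space V" for x y
    proof -
      have "(sqrt (joint \<theta>1 (x, y)) - sqrt (joint \<theta>2 (x, y)))\<^sup>2 =
          (sqrt (g x))\<^sup>2 * (sqrt (dens (\<theta>1 x) y) - sqrt (dens (\<theta>2 x) y))\<^sup>2"
        by (simp add: jdens_def real_sqrt_mult right_diff_distrib mult.commute flip: power_mult_distrib)
      then show ?thesis using g_nonneg[OF that] by simp
    qed
    show "integrable \<mu> (\<lambda>y. (sqrt (dens (\<theta>1 x) y) - sqrt (dens (\<theta>2 x) y))\<^sup>2)" for x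
      by (rule integrable_sqrt_dens_diff_square)
    show "(\<integral>y. (sqrt (dens (\<theta>1 x) y) - sqrt (dens (\<theta>2 x) y))\<^sup>2 \<partial>\<mu>) \<le> 2 * B" if "x \<in> space V" for x
      using order_trans[OF integral_sqrt_dens_diff_square_le mult_left_mono[OF gap[OF that], of 2]]
      by simp
  qed (use \<open>0 \<le> B\<close> in auto)
  moreover have "?I \<ge> 0" by (intro integral_nonneg_AE AE_I2) simp
  ultimately show ?thesis by (simp add: hellinger_def)
qed

lemma dens_llr_measurable:
  assumes [measurable]: "\<theta>1 \<in> borel_measurable V" "\<theta>2 \<in> borel_measurable V"
  shows "(\<lambda>z. dens (\<theta>1 (fst z)) (snd z)) \<in> borel_measurable (V \<Otimes>\<^sub>M \<mu>)"
    and "(\<lambda>z. llr (\<theta>1 (fst z)) (\<theta>2 (fst z)) (snd z)) \<in> borel_measurable (V \<Otimes>\<^sub>M \<mu>)"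
  unfolding cdens_def llr_def by simp_all

text \<open>By ln t \<le> t - 1, the KL divergence is at most the exponential moment of the
  log-likelihood ratio minus one.\<close>
lemma KL_joint_le:
  assumes \<theta>_meas: "\<theta>1 \<in> borel_measurable V" "\<theta>2 \<in> borel_measurable V"
    and exp_gap: "\<And>x. x \<in> space V \<Longrightarrow> exp (J (2 * \<theta>1 x - \<theta>2 x) - 2 * J (\<theta>1 x) + J (\<theta>2 x)) \<le> 1 + B"
    and "0 \<le> B"
  shows "KL (V \<Otimes>\<^sub>M \<mu>) (joint \<theta>1) (joint \<theta>2) \<le> B"
proof -
  define d where "d z = dens (\<theta>1 (fst z)) (snd z)" for z
  define L where "L z = llr (\<theta>1 (fst z)) (\<theta>2 (fst z)) (snd z)" for z
  note [measurable] = dens_llr_measurable[OF \<theta>_meas, folded d_def L_def]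
  have KL_eq: "KL (V \<Otimes>\<^sub>M \<mu>) (joint \<theta>1) (joint \<theta>2) = (\<integral>z. g (fst z) * (d z * L z) \<partial>(V \<Otimes>\<^sub>M \<mu>))"
    unfolding KL_def d_def L_def by (rule integral_joint_log_ratio[where \<phi> = "\<lambda>t. t"])
  have int_d: "integrable (V \<Otimes>\<^sub>M \<mu>) (\<lambda>z. g (fst z) * d z)"
    by (rule integrable_mixture[where u = "\<lambda>x. dens (\<theta>1 x)" and B = 1], measurable)
       (auto simp: d_def dens_nonneg integrable_dens integral_dens)
  have integral_d: "(\<integral>z. g (fst z) * d z \<partial>(V \<Otimes>\<^sub>M \<mu>)) = 1"
    by (rule integral_mixture_eq[where u = "\<lambda>x. dens (\<theta>1 x)"], measurable)
       (auto simp: d_def dens_nonneg integrable_dens integral_dens)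
  let ?u = "\<lambda>x y. dens (\<theta>1 x) y * exp (llr (\<theta>1 x) (\<theta>2 x) y)"
  have int_exp: "integrable (V \<Otimes>\<^sub>M \<mu>) (\<lambda>z. g (fst z) * (d z * exp (L z)))"
    by (rule integrable_mixture[where u = ?u and B = "1 + B"], measurable)
       (use \<open>0 \<le> B\<close> exp_gap in \<open>auto simp: d_def L_def dens_nonneg integrable_dens_mult_exp_llr
          integral_dens_mult_exp_llr\<close>)
  have integral_exp: "(\<integral>z. g (fst z) * (d z * exp (L z)) \<partial>(V \<Otimes>\<^sub>M \<mu>)) \<le> 1 + B"
    by (rule integral_mixture_le[where u = ?u], measurable)
       (use \<open>0 \<le> B\<close> exp_gap in \<open>auto simp: d_def L_def dens_nonneg integrable_dens_mult_exp_llr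
          integral_dens_mult_exp_llr\<close>)
  show ?thesis
  proof (cases "integrable (V \<Otimes>\<^sub>M \<mu>) (\<lambda>z. g (fst z) * (d z * L z))")
    case True
    have "(\<integral>z. g (fst z) * (d z * L z) \<partial>(V \<Otimes>\<^sub>M \<mu>)) \<le>
        (\<integral>z. g (fst z) * (d z * exp (L z)) - g (fst z) * d z \<partial>(V \<Otimes>\<^sub>M \<mu>))"
    proof (rule integral_mono[OF True Bochner_Integration.integrable_diff[OF int_exp int_d]])
      fix z assume "z \<in> space (V \<Otimes>\<^sub>M \<mu>)"
      then have "0 \<le> g (fst z) * d z"
        by (auto simp: space_pair_measure d_def dens_nonneg g_nonneg)
      then have "g (fst z) * d z * (L z + 1) \<le> g (fst z) * d z * exp (L z)"
        by (intro mult_left_mono) (simp_all add: add.commute)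
      then show "g (fst z) * (d z * L z) \<le> g (fst z) * (d z * exp (L z)) - g (fst z) * d z"
        by (simp add: algebra_simps)
    qed
    also have "\<dots> \<le> B"
      using integral_exp integral_d by (simp add: Bochner_Integration.integral_diff[OF int_exp int_d])
    finally show ?thesis unfolding KL_eq .
  next
    case False
    \<comment> \<open>KL is a Bochner integral, which is 0 for a non-integrable integrand.\<close>
    then show ?thesis using \<open>0 \<le> B\<close> by (simp add: KL_eq not_integrable_integral_eq)
  qed
qed

lemma abs_KL_joint_le:
  assumes \<theta>_meas: "\<theta>1 \<in> borel_measurable V" "\<theta>2 \<in> borel_measurable V"
    and bound: "\<And>x. x \<in> space V \<Longrightarrow>
      2 * \<bar>\<theta>1 x - \<theta>2 x\<bar> * cosh_moment (\<theta>1 x) + \<bar>J (\<theta>1 x) - J (\<theta>2 x)\<bar> \<le> B"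
    and "0 \<le> B"
  shows "\<bar>KL (V \<Otimes>\<^sub>M \<mu>) (joint \<theta>1) (joint \<theta>2)\<bar> \<le> B"
proof -
  note [measurable] = dens_llr_measurable[OF \<theta>_meas]
  let ?G = "\<lambda>z. g (fst z) * (dens (\<theta>1 (fst z)) (snd z) * llr (\<theta>1 (fst z)) (\<theta>2 (fst z)) (snd z))"
  have "\<bar>KL (V \<Otimes>\<^sub>M \<mu>) (joint \<theta>1) (joint \<theta>2)\<bar> = \<bar>\<integral>z. ?G z \<partial>(V \<Otimes>\<^sub>M \<mu>)\<bar>"
    unfolding KL_def by (subst integral_joint_log_ratio[where \<phi> = "\<lambda>t. t"]) (rule refl)
  also have "\<dots> \<le> (\<integral>z. \<bar>?G z\<bar> \<partial>(V \<Otimes>\<^sub>M \<mu>))"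
    by (rule integral_abs_bound)
  also have "\<dots> \<le> B"
  proof (rule integral_mixture_le[where u = "\<lambda>x y. dens (\<theta>1 x) y * \<bar>llr (\<theta>1 x) (\<theta>2 x) y\<bar>"], measurable)
    show "(\<integral>y. dens (\<theta>1 x) y * \<bar>llr (\<theta>1 x) (\<theta>2 x) y\<bar> \<partial>\<mu>) \<le> B" if "x \<in> space V" for x
      using order_trans[OF integral_dens_mult_abs_llr_le bound[OF that]] .
  qed (use \<open>0 \<le> B\<close> in \<open>auto simp: abs_mult g_nonneg dens_nonneg integrable_dens_mult_abs_llr\<close>)
  finally show ?thesis .
qed

lemma V20_joint_le:
  assumes \<theta>_meas: "\<theta>1 \<in> borel_measurable V" "\<theta>2 \<in> borel_measurable V"
    and bound: "\<And>x. x \<in> space V \<Longrightarrow>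
      3 * (8 * (\<theta>1 x - \<theta>2 x)\<^sup>2 * cosh_moment (\<theta>1 x) + (J (\<theta>1 x) - J (\<theta>2 x))\<^sup>2
        + (KL (V \<Otimes>\<^sub>M \<mu>) (joint \<theta>1) (joint \<theta>2))\<^sup>2) \<le> B"
    and "0 \<le> B"
  shows "V20 (V \<Otimes>\<^sub>M \<mu>) (joint \<theta>1) (joint \<theta>2) \<le> B"
proof -
  note [measurable] = dens_llr_measurable[OF \<theta>_meas]
  define K where "K = KL (V \<Otimes>\<^sub>M \<mu>) (joint \<theta>1) (joint \<theta>2)"
  let ?u = "\<lambda>x y. dens (\<theta>1 x) y * (llr (\<theta>1 x) (\<theta>2 x) y - K)\<^sup>2"
  have "V20 (V \<Otimes>\<^sub>M \<mu>) (joint \<theta>1) (joint \<theta>2) = (\<integral>z. g (fst z) * ?u (fst z) (snd z) \<partial>(V \<Otimes>\<^sub>M \<mu>))"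
    unfolding V20_def K_def[symmetric] power2_abs
    by (rule integral_joint_log_ratio[where \<phi> = "\<lambda>t. (t - K)\<^sup>2"])
  also have "\<dots> \<le> B"
  proof (rule integral_mixture_le[where u = ?u], measurable)
    show "(\<integral>y. ?u x y \<partial>\<mu>) \<le> B" if "x \<in> space V" for x
      using order_trans[OF integral_dens_mult_llr_dev_le bound[OF that, folded K_def]] .
  qed (use \<open>0 \<le> B\<close> in \<open>auto simp: dens_nonneg integrable_dens_mult_llr_dev\<close>)
  finally show ?thesis .
qed

lemma KL_V20_joint_le_square:
  assumes J_diff: "\<forall>t. J differentiable at t" and J'_diff: "\<forall>t. deriv J differentiable at t"
    and J''_cont: "continuous_on UNIV (deriv (deriv J))"
  obtains C4 C5 where "C4 > 0" "C5 > 0"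
    and "\<And>\<theta>1 \<theta>2 \<delta>. \<theta>1 \<in> borel_measurable V \<Longrightarrow> \<theta>2 \<in> borel_measurable V \<Longrightarrow>
      (\<And>x. x \<in> space V \<Longrightarrow> \<bar>\<theta>1 x\<bar> \<le> R \<and> \<bar>\<theta>2 x\<bar> \<le> R \<and> \<bar>\<theta>1 x - \<theta>2 x\<bar> \<le> \<delta>) \<Longrightarrow>
      KL (V \<Otimes>\<^sub>M \<mu>) (joint \<theta>1) (joint \<theta>2) \<le> C4 * \<delta>\<^sup>2 \<and>
      V20 (V \<Otimes>\<^sub>M \<mu>) (joint \<theta>1) (joint \<theta>2) \<le> C5 * \<delta>\<^sup>2"
proof -
  obtain M1 M2 MC where M: "M1 \<ge> 0" "M2 \<ge> 0" "MC \<ge> 0"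
    and J_lip: "\<And>a b. \<bar>a\<bar> \<le> R \<Longrightarrow> \<bar>b\<bar> \<le> R \<Longrightarrow> \<bar>J a - J b\<bar> \<le> M1 * \<bar>a - b\<bar>"
    and exp_gap: "\<And>a b. \<bar>a\<bar> \<le> R \<Longrightarrow> \<bar>b\<bar> \<le> R \<Longrightarrow>
      exp (J (2 * a - b) - 2 * J a + J b) \<le> 1 + M2 * (a - b)\<^sup>2"
    and cosh_le: "\<And>a. \<bar>a\<bar> \<le> R \<Longrightarrow> cosh_moment a \<le> MC"
    by (rule logpart_local_bounds[OF J_diff J'_diff J''_cont, of R]) blast
  define C5 where "C5 = 3 * (8 * MC + M1\<^sup>2 + (2 * MC + M1)\<^sup>2) + 1"
  show thesis
  proof (rule that[of "M2 + 1" C5])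
    show "M2 + 1 > 0" "C5 > 0" using M by (simp_all add: C5_def add_nonneg_pos)
    fix \<theta>1 \<theta>2 \<delta>
    assume \<theta>_meas: "\<theta>1 \<in> borel_measurable V" "\<theta>2 \<in> borel_measurable V"
      and \<theta>_bound: "\<And>x. x \<in> space V \<Longrightarrow> \<bar>\<theta>1 x\<bar> \<le> R \<and> \<bar>\<theta>2 x\<bar> \<le> R \<and> \<bar>\<theta>1 x - \<theta>2 x\<bar> \<le> \<delta>"
    obtain x0 where "x0 \<in> space V" using space_nonempty by blast
    then have "\<delta> \<ge> 0" using \<theta>_bound[of x0] by linarith
    have diff_sq: "(\<theta>1 x - \<theta>2 x)\<^sup>2 \<le> \<delta>\<^sup>2" if "x \<in> space V" for x
      using \<theta>_bound[OF that] power_mono[of "\<bar>\<theta>1 x - \<theta>2 x\<bar>" \<delta> 2] by simp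
    have J_diff_le: "\<bar>J (\<theta>1 x) - J (\<theta>2 x)\<bar> \<le> M1 * \<delta>" if "x \<in> space V" for x
      using J_lip[of "\<theta>1 x" "\<theta>2 x"] \<theta>_bound[OF that] mult_left_mono[OF _ M(1)] by force
    have KL_le: "KL (V \<Otimes>\<^sub>M \<mu>) (joint \<theta>1) (joint \<theta>2) \<le> (M2 + 1) * \<delta>\<^sup>2"
    proof (rule KL_joint_le[OF \<theta>_meas])
      fix x assume x: "x \<in> space V"
      have "M2 * (\<theta>1 x - \<theta>2 x)\<^sup>2 \<le> (M2 + 1) * \<delta>\<^sup>2"
        using M(2) diff_sq[OF x] by (intro mult_mono) auto
      then show "exp (J (2 * \<theta>1 x - \<theta>2 x) - 2 * J (\<theta>1 x) + J (\<theta>2 x)) \<le> 1 + (M2 + 1) * \<delta>\<^sup>2"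
        using exp_gap[of "\<theta>1 x" "\<theta>2 x"] \<theta>_bound[OF x] by linarith
    qed (use M in simp)
    have KL_abs: "\<bar>KL (V \<Otimes>\<^sub>M \<mu>) (joint \<theta>1) (joint \<theta>2)\<bar> \<le> (2 * MC + M1) * \<delta>"
    proof (rule abs_KL_joint_le[OF \<theta>_meas])
      fix x assume x: "x \<in> space V"
      have "2 * \<bar>\<theta>1 x - \<theta>2 x\<bar> * cosh_moment (\<theta>1 x) \<le> 2 * \<delta> * MC"
        using \<theta>_bound[OF x] cosh_le[of "\<theta>1 x"] cosh_moment_nonneg by (intro mult_mono) auto
      with J_diff_le[OF x] show "2 * \<bar>\<theta>1 x - \<theta>2 x\<bar> * cosh_moment (\<theta>1 x) + \<bar>J (\<theta>1 x) - J (\<theta>2 x)\<bar>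
          \<le> (2 * MC + M1) * \<delta>"
        by (simp add: algebra_simps)
    qed (use M \<open>\<delta> \<ge> 0\<close> in simp)
    have KL_sq: "(KL (V \<Otimes>\<^sub>M \<mu>) (joint \<theta>1) (joint \<theta>2))\<^sup>2 \<le> (2 * MC + M1)\<^sup>2 * \<delta>\<^sup>2"
      using power_mono[OF KL_abs abs_ge_zero, of 2] by (simp add: power_mult_distrib)
    have "V20 (V \<Otimes>\<^sub>M \<mu>) (joint \<theta>1) (joint \<theta>2) \<le> C5 * \<delta>\<^sup>2"
    proof (rule V20_joint_le[OF \<theta>_meas])
      fix x assume x: "x \<in> space V"
      have "8 * (\<theta>1 x - \<theta>2 x)\<^sup>2 * cosh_moment (\<theta>1 x) \<le> 8 * \<delta>\<^sup>2 * MC"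
        using diff_sq[OF x] cosh_le[of "\<theta>1 x"] \<theta>_bound[OF x] cosh_moment_nonneg
        by (intro mult_mono) auto
      moreover have "(J (\<theta>1 x) - J (\<theta>2 x))\<^sup>2 \<le> M1\<^sup>2 * \<delta>\<^sup>2"
        using power_mono[OF J_diff_le[OF x] abs_ge_zero, of 2] by (simp add: power_mult_distrib)
      ultimately have "3 * (8 * (\<theta>1 x - \<theta>2 x)\<^sup>2 * cosh_moment (\<theta>1 x) + (J (\<theta>1 x) - J (\<theta>2 x))\<^sup>2
          + (KL (V \<Otimes>\<^sub>M \<mu>) (joint \<theta>1) (joint \<theta>2))\<^sup>2)
          \<le> 3 * (8 * \<delta>\<^sup>2 * MC + M1\<^sup>2 * \<delta>\<^sup>2 + (2 * MC + M1)\<^sup>2 * \<delta>\<^sup>2)"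
        using KL_sq by (intro mult_left_mono add_mono) auto
      also have "\<dots> \<le> C5 * \<delta>\<^sup>2"
        by (simp add: C5_def algebra_simps)
      finally show "3 * (8 * (\<theta>1 x - \<theta>2 x)\<^sup>2 * cosh_moment (\<theta>1 x) + (J (\<theta>1 x) - J (\<theta>2 x))\<^sup>2
          + (KL (V \<Otimes>\<^sub>M \<mu>) (joint \<theta>1) (joint \<theta>2))\<^sup>2) \<le> C5 * \<delta>\<^sup>2" .
    qed (use M in \<open>simp add: C5_def\<close>)
    with KL_le show "KL (V \<Otimes>\<^sub>M \<mu>) (joint \<theta>1) (joint \<theta>2) \<le> (M2 + 1) * \<delta>\<^sup>2 \<and>
        V20 (V \<Otimes>\<^sub>M \<mu>) (joint \<theta>1) (joint \<theta>2) \<le> C5 * \<delta>\<^sup>2" by simp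
  qed
qed

lemma KL_V20_jdens_le_supnorm:
  assumes J_diff: "\<forall>t. J differentiable at t" and J'_diff: "\<forall>t. deriv J differentiable at t"
    and J''_cont: "continuous_on UNIV (deriv (deriv J))"
    and zeta_diff: "\<forall>t. \<zeta> differentiable at t" and zeta_deriv: "bounded (range (deriv \<zeta>))"
    and "bounded \<Omega>"
  shows "\<exists>C4>0. \<exists>C5>0. \<forall>f1 f2.
           f1 \<in> borel_measurable V \<longrightarrow> f2 \<in> borel_measurable V \<longrightarrow>
           (\<forall>x\<in>space V. f1 x \<in> \<Omega> \<and> f2 x \<in> \<Omega>) \<longrightarrow>
           KL (V \<Otimes>\<^sub>M \<mu>) (jdens \<mu> h \<kappa> \<zeta> g f1) (jdens \<mu> h \<kappa> \<zeta> g f2)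
              \<le> C4 * (supnorm V (\<lambda>x. f1 x - f2 x))\<^sup>2 \<and>
           V20 (V \<Otimes>\<^sub>M \<mu>) (jdens \<mu> h \<kappa> \<zeta> g f1) (jdens \<mu> h \<kappa> \<zeta> g f2)
              \<le> C5 * (supnorm V (\<lambda>x. f1 x - f2 x))\<^sup>2"
proof -
  have "bounded (\<zeta> ` closure \<Omega>)"
    using \<open>bounded \<Omega>\<close>
    by (intro compact_imp_bounded compact_continuous_image continuous_on_if_differentiable[OF zeta_diff])
       simp
  then obtain R where zeta_bound: "\<And>w. w \<in> \<Omega> \<Longrightarrow> \<bar>\<zeta> w\<bar> \<le> R"
    using closure_subset by (auto simp: bounded_real)
  obtain Bz where "Bz > 0" and zeta_lip: "\<And>u v. \<bar>\<zeta> u - \<zeta> v\<bar> \<le> Bz * \<bar>u - v\<bar>"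
    using lipschitz_if_bounded_deriv[OF zeta_diff zeta_deriv] by blast
  have zeta_meas: "\<zeta> \<in> borel_measurable borel"
    by (rule borel_measurable_continuous_onI[OF continuous_on_if_differentiable[OF zeta_diff]])
  show ?thesis
  proof (rule KL_V20_joint_le_square[OF J_diff J'_diff J''_cont, of R])
    fix C4 C5 assume C: "C4 > 0" "C5 > 0"
      and KL_V20_le: "\<And>\<theta>1 \<theta>2 \<delta>. \<theta>1 \<in> borel_measurable V \<Longrightarrow> \<theta>2 \<in> borel_measurable V \<Longrightarrow>
        (\<And>x. x \<in> space V \<Longrightarrow> \<bar>\<theta>1 x\<bar> \<le> R \<and> \<bar>\<theta>2 x\<bar> \<le> R \<and> \<bar>\<theta>1 x - \<theta>2 x\<bar> \<le> \<delta>) \<Longrightarrow>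
        KL (V \<Otimes>\<^sub>M \<mu>) (joint \<theta>1) (joint \<theta>2) \<le> C4 * \<delta>\<^sup>2 \<and>
        V20 (V \<Otimes>\<^sub>M \<mu>) (joint \<theta>1) (joint \<theta>2) \<le> C5 * \<delta>\<^sup>2"
    show ?thesis
    proof (rule exI[of _ "C4 * Bz\<^sup>2"], intro conjI exI[of _ "C5 * Bz\<^sup>2"] allI impI)
      show "C4 * Bz\<^sup>2 > 0" "C5 * Bz\<^sup>2 > 0"
        using C \<open>Bz > 0\<close> by simp_all
      fix f1 f2 :: "'a \<Rightarrow> real" assume f_meas: "f1 \<in> borel_measurable V" "f2 \<in> borel_measurable V"
        and in_\<Omega>: "\<forall>x\<in>space V. f1 x \<in> \<Omega> \<and> f2 x \<in> \<Omega>"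
      define s where "s = supnorm V (\<lambda>x. f1 x - f2 x)"
      have diff_le: "\<bar>f1 x - f2 x\<bar> \<le> s" if "x \<in> space V" for x
        unfolding s_def using \<open>bounded \<Omega>\<close> in_\<Omega> by (intro abs_le_supnorm bounded_image_diff that) auto
      have "KL (V \<Otimes>\<^sub>M \<mu>) (joint (\<lambda>x. \<zeta> (f1 x))) (joint (\<lambda>x. \<zeta> (f2 x))) \<le> C4 * (Bz * s)\<^sup>2 \<and>
        V20 (V \<Otimes>\<^sub>M \<mu>) (joint (\<lambda>x. \<zeta> (f1 x))) (joint (\<lambda>x. \<zeta> (f2 x))) \<le> C5 * (Bz * s)\<^sup>2"
      proof (rule KL_V20_le)
        show "(\<lambda>x. \<zeta> (f1 x)) \<in> borel_measurable V" "(\<lambda>x. \<zeta> (f2 x)) \<in> borel_measurable V"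
          using f_meas by (simp_all add: measurable_compose[OF _ zeta_meas])
        fix x assume x: "x \<in> space V"
        have "\<bar>\<zeta> (f1 x) - \<zeta> (f2 x)\<bar> \<le> Bz * s"
          using zeta_lip[of "f1 x" "f2 x"] mult_left_mono[OF diff_le[OF x] less_imp_le[OF \<open>Bz > 0\<close>]]
          by linarith
        with x in_\<Omega> zeta_bound
        show "\<bar>\<zeta> (f1 x)\<bar> \<le> R \<and> \<bar>\<zeta> (f2 x)\<bar> \<le> R \<and> \<bar>\<zeta> (f1 x) - \<zeta> (f2 x)\<bar> \<le> Bz * s"
          by blast
      qed
      then show "KL (V \<Otimes>\<^sub>M \<mu>) (jdens \<mu> h \<kappa> \<zeta> g f1) (jdens \<mu> h \<kappa> \<zeta> g f2)
          \<le> C4 * Bz\<^sup>2 * (supnorm V (\<lambda>x. f1 x - f2 x))\<^sup>2"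
        and "V20 (V \<Otimes>\<^sub>M \<mu>) (jdens \<mu> h \<kappa> \<zeta> g f1) (jdens \<mu> h \<kappa> \<zeta> g f2)
          \<le> C5 * Bz\<^sup>2 * (supnorm V (\<lambda>x. f1 x - f2 x))\<^sup>2"
        unfolding jdens_eq_joint[of \<zeta>] by (simp_all add: s_def power_mult_distrib mult.assoc)
    qed
  qed
qed

lemma hellinger_jdens_le_supnorm:
  assumes J_diff: "\<forall>t. J differentiable at t" and J'_diff: "\<forall>t. deriv J differentiable at t"
    and J'_inj: "inj (deriv J)" and zeta_link: "\<forall>t. deriv J (\<zeta> t) = l t"
    and l_diff: "\<forall>t. l differentiable at t" and l_deriv: "bounded (range (deriv l))"
    and zeta_diff: "\<forall>t. \<zeta> differentiable at t" and zeta_deriv: "bounded (range (deriv \<zeta>))"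
  shows "\<exists>C6>0. \<forall>f1 f2.
        f1 \<in> borel_measurable V \<longrightarrow> f2 \<in> borel_measurable V \<longrightarrow>
        bounded ((\<lambda>x. f1 x - f2 x) ` space V) \<longrightarrow>
        (hellinger (V \<Otimes>\<^sub>M \<mu>) (jdens \<mu> h \<kappa> \<zeta> g f1) (jdens \<mu> h \<kappa> \<zeta> g f2))\<^sup>2
          \<le> C6 * (supnorm V (\<lambda>x. f1 x - f2 x))\<^sup>2"
proof -
  obtain Bz where "Bz > 0" and zeta_lip: "\<And>u v. \<bar>\<zeta> u - \<zeta> v\<bar> \<le> Bz * \<bar>u - v\<bar>"
    using lipschitz_if_bounded_deriv[OF zeta_diff zeta_deriv] by blast
  obtain Bl where "Bl > 0" and l_lip: "\<And>u v. \<bar>l u - l v\<bar> \<le> Bl * \<bar>u - v\<bar>"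
    using lipschitz_if_bounded_deriv[OF l_diff l_deriv] by blast
  have [measurable]: "\<zeta> \<in> borel_measurable borel"
    by (rule borel_measurable_continuous_onI[OF continuous_on_if_differentiable[OF zeta_diff]])
  show ?thesis
  proof (intro exI[of _ "Bz * Bl / 2"] conjI allI impI)
    show "Bz * Bl / 2 > 0" using \<open>Bz > 0\<close> \<open>Bl > 0\<close> by simp
    fix f1 f2 :: "'a \<Rightarrow> real" assume [measurable]: "f1 \<in> borel_measurable V" "f2 \<in> borel_measurable V"
      and bounded: "bounded ((\<lambda>x. f1 x - f2 x) ` space V)"
    define s where "s = supnorm V (\<lambda>x. f1 x - f2 x)"
    have gap: "(J (\<zeta> (f1 x)) + J (\<zeta> (f2 x))) / 2 - J ((\<zeta> (f1 x) + \<zeta> (f2 x)) / 2) \<le> Bz * Bl / 4 * s\<^sup>2"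
      if "x \<in> space V" for x
    proof -
      have d: "\<bar>f1 x - f2 x\<bar> \<le> s"
        unfolding s_def using abs_le_supnorm[OF bounded that] by simp
      have "(J (\<zeta> (f1 x)) + J (\<zeta> (f2 x))) / 2 - J ((\<zeta> (f1 x) + \<zeta> (f2 x)) / 2)
          \<le> \<bar>\<zeta> (f1 x) - \<zeta> (f2 x)\<bar> * \<bar>l (f1 x) - l (f2 x)\<bar> / 4"
        using midpoint_gap_le[OF J_diff J'_diff J'_inj, of "\<zeta> (f1 x)" "\<zeta> (f2 x)"]
        by (simp add: zeta_link)
      also have "\<dots> \<le> (Bz * s) * (Bl * s) / 4"
        using d \<open>Bz > 0\<close> \<open>Bl > 0\<close>
        by (intro divide_right_mono mult_mono order_trans[OF zeta_lip] order_trans[OF l_lip]) auto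
      finally show ?thesis by (simp add: power2_eq_square mult_ac)
    qed
    have "(hellinger (V \<Otimes>\<^sub>M \<mu>) (joint (\<lambda>x. \<zeta> (f1 x))) (joint (\<lambda>x. \<zeta> (f2 x))))\<^sup>2
        \<le> 2 * (Bz * Bl / 4 * s\<^sup>2)"
      using \<open>Bz > 0\<close> \<open>Bl > 0\<close> by (intro hellinger_joint_le gap) simp_all
    then show "(hellinger (V \<Otimes>\<^sub>M \<mu>) (jdens \<mu> h \<kappa> \<zeta> g f1) (jdens \<mu> h \<kappa> \<zeta> g f2))\<^sup>2
        \<le> Bz * Bl / 2 * (supnorm V (\<lambda>x. f1 x - f2 x))\<^sup>2"
      unfolding jdens_eq_joint[of \<zeta>] by (simp add: s_def mult_ac)
  qed
qed

end

theorem lemma7: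
  fixes V :: "'a measure" and g :: "'a \<Rightarrow> real"
    and \<mu> :: "real measure" and Y :: "real set"
    and h \<kappa> l \<zeta> :: "real \<Rightarrow> real"
  assumes V_sf: "sigma_finite_measure V"
    and g_meas: "g \<in> borel_measurable V"
    and g_nonneg: "\<forall>x\<in>space V. g x \<ge> 0"
    and G_prob: "prob_space (density V g)"
    and mu_def: "(Y \<in> sets lborel \<and> \<mu> = restrict_space lborel Y) \<or> (countable Y \<and> \<mu> = count_space Y)"
    and h_meas: "h \<in> borel_measurable \<mu>" and h_nonneg: "\<forall>y. h y \<ge> 0"
    and kappa_meas: "\<kappa> \<in> borel_measurable \<mu>"
    and J_finite: "\<forall>\<theta>. integrable \<mu> (\<lambda>y. h y * exp (\<theta> * \<kappa> y)) \<and> (\<integral>y. h y * exp (\<theta> * \<kappa> y) \<partial>\<mu>) > 0"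
    and J_C2: "\<forall>t. logpart \<mu> h \<kappa> differentiable at t"
              "\<forall>t. deriv (logpart \<mu> h \<kappa>) differentiable at t"
              "continuous_on UNIV (deriv (deriv (logpart \<mu> h \<kappa>)))"
    and minimal: "minimal_family \<mu> h \<kappa>"
    and J'_inj: "inj (deriv (logpart \<mu> h \<kappa>))"
    and zeta_link: "\<forall>t. deriv (logpart \<mu> h \<kappa>) (\<zeta> t) = l t"
    and l_C1: "\<forall>t. l differentiable at t" "continuous_on UNIV (deriv l)" "bounded (range (deriv l))"
    and zeta_C1: "\<forall>t. \<zeta> differentiable at t" "continuous_on UNIV (deriv \<zeta>)" "bounded (range (deriv \<zeta>))"
  shows
    "(\<forall>\<Omega> :: real set. bounded \<Omega> \<longrightarrow>
        (\<exists>C4>0. \<exists>C5>0. \<forall>f1 f2.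
           f1 \<in> borel_measurable V \<longrightarrow> f2 \<in> borel_measurable V \<longrightarrow>
           (\<forall>x\<in>space V. f1 x \<in> \<Omega> \<and> f2 x \<in> \<Omega>) \<longrightarrow>
           KL (V \<Otimes>\<^sub>M \<mu>) (jdens \<mu> h \<kappa> \<zeta> g f1) (jdens \<mu> h \<kappa> \<zeta> g f2)
              \<le> C4 * (supnorm V (\<lambda>x. f1 x - f2 x))^2 \<and>
           V20 (V \<Otimes>\<^sub>M \<mu>) (jdens \<mu> h \<kappa> \<zeta> g f1) (jdens \<mu> h \<kappa> \<zeta> g f2)
              \<le> C5 * (supnorm V (\<lambda>x. f1 x - f2 x))^2))
     \<and>
     (\<exists>C6>0. \<forall>f1 f2.
        f1 \<in> borel_measurable V \<longrightarrow> f2 \<in> borel_measurable V \<longrightarrow>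
        bounded ((\<lambda>x. f1 x - f2 x) ` space V) \<longrightarrow>
        (hellinger (V \<Otimes>\<^sub>M \<mu>) (jdens \<mu> h \<kappa> \<zeta> g f1) (jdens \<mu> h \<kappa> \<zeta> g f2))^2
          \<le> C6 * (supnorm V (\<lambda>x. f1 x - f2 x))^2)"
proof -
  \<comment> \<open>Minimality only serves in the paper to make J' injective, which is assumed directly here.\<close>
  have "sigma_finite_measure \<mu>"
    using mu_def by (auto intro: sigma_finite_measure_restrict_space[OF sigma_finite_lborel]
      sigma_finite_measure_count_space_countable)
  moreover have "(\<integral>\<^sup>+x. g x \<partial>V) = 1"
  proof -
    have "(\<integral>\<^sup>+x. g x \<partial>V) = emeasure (density V g) (space (density V g))"
      using g_meas by (subst emeasure_density) (auto intro!: nn_integral_cong)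
    then show ?thesis
      using prob_space.emeasure_space_1[OF G_prob] by simp
  qed
  ultimately interpret joint_model \<mu> h \<kappa> V g
    using h_meas h_nonneg kappa_meas J_finite g_meas g_nonneg
    by (intro joint_model.intro exp_family.intro joint_model_axioms.intro) simp_all
  show ?thesis
    using KL_V20_jdens_le_supnorm[OF J_C2 zeta_C1(1,3)]
      hellinger_jdens_le_supnorm[OF J_C2(1,2) J'_inj zeta_link l_C1(1,3) zeta_C1(1,3)]
    by simp
qed

end
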